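(* Let $N\ge1$, $f:\mathbb{N}^N\to\mathbb{N}$, $p$ a prime, $n$ a nonnegative integer and $\mathbf{m}\in\mathbb{N}^N$. Define $g:\mathbb{N}^N\to\mathbb{N}$ by $g(\mathbf{x})=\binom{p}{p\mathbf{x}}_f$. Then $\binom{np}{p\mathbf{m}}_f\equiv\binom{n}{\mathbf{m}}_g\pmod{p^2}$.
   Context: $\mathbb{N}=\{0,1,2,\dots\}$. For a function $h:\mathbb{N}^N\to\mathbb{N}$, $k\ge0$ and $\mathbf{x}\in\mathbb{N}^N$, $\binom{k}{\mathbf{x}}_h=\sum_{\mathbf{m}_1+\cdots+\mathbf{m}_k=\mathbf{x}} h(\mathbf{m}_1)\cdots h(\mathbf{m}_k)$ over tuples of vectors in $\mathbb{N}^N$. *)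

theory Defs
  imports Main "HOL-Number_Theory.Cong"
begin

text \<open>Vectors in N^N are modelled as functions 'n \<Rightarrow> nat for a finite (nonempty)
index type 'n, so N = CARD('n) \<ge> 1.  The generalized multinomial coefficient
binom_h h k x is the sum over all k-tuples (m_1,...,m_k) of vectors (lists of
length k) with m_1 + ... + m_k = x of the product h(m_1) ... h(m_k).\<close>

definition gbinom :: "(('n::finite \<Rightarrow> nat) \<Rightarrow> nat) \<Rightarrow> nat \<Rightarrow> ('n \<Rightarrow> nat) \<Rightarrow> nat" where
  "gbinom h k x =
     (\<Sum>ms \<in> {ms :: ('n \<Rightarrow> nat) list. length ms = k \<and> (\<forall>j. (\<Sum>m\<leftarrow>ms. m j) = x j)}.
        (\<Prod>m\<leftarrow>ms. h m))"

end

theory Submission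
  imports Defs "HOL-Library.Function_Algebras"
begin

text \<open>Cutting a composition of \<open>x\<close> into \<open>n p\<close> parts into \<open>n\<close> consecutive blocks of \<open>p\<close>
parts gives \<open>gbinom f (n p) x = gbinom B n x\<close> with \<open>B = gbinom f p\<close>. Rotating the \<open>p\<close> parts
permutes the compositions of \<open>y\<close> into \<open>p\<close> parts in orbits of size \<open>p\<close>, unless \<open>y\<close> is divisible
by \<open>p\<close>; so \<open>p\<close> divides \<open>B y\<close> whenever some coordinate of \<open>y\<close> is prime to \<open>p\<close>. In a composition
\<open>(y\<^sub>1, \<dots>, y\<^sub>n)\<close> of \<open>p m\<close> the number of blocks not divisible by \<open>p\<close> is never exactly one,
so every term containing such a block vanishes modulo \<open>p\<^sup>2\<close>; the remaining terms, those with all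
\<open>y\<^sub>i = p z\<^sub>i\<close>, add up to \<open>gbinom g n m\<close>.\<close>

lemma sum_list_fun_apply: "sum_list ms j = (\<Sum>m\<leftarrow>ms. m j)"
  by (induction ms) simp_all

definition compositions :: "nat \<Rightarrow> ('n \<Rightarrow> nat) \<Rightarrow> ('n \<Rightarrow> nat) list set" where
  "compositions k x = {ms. length ms = k \<and> sum_list ms = x}"

lemma gbinom_compositions: "gbinom h k x = (\<Sum>ms\<in>compositions k x. \<Prod>m\<leftarrow>ms. h m)"
  by (simp add: gbinom_def compositions_def fun_eq_iff sum_list_fun_apply)

lemma finite_atMost_fun: "finite {..x :: 'n::finite \<Rightarrow> nat}"
proof -
  have "{..x} \<subseteq> {y. \<forall>j. (j \<in> UNIV \<longrightarrow> y j \<in> {..Max (range x)}) \<and> (j \<notin> UNIV \<longrightarrow> y j = 0)}"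
  proof safe
    fix y j assume "y \<le> x"
    then have "y j \<le> x j" by (simp add: le_fun_def)
    also have "x j \<le> Max (range x)" by (rule Max_ge) auto
    finally show "y j \<le> Max (range x)" .
  qed simp
  moreover have "finite \<dots>"
    by (rule finite_set_of_finite_funs) auto
  ultimately show ?thesis
    by (rule finite_subset)
qed

lemma finite_compositions: "finite (compositions k (x :: 'n::finite \<Rightarrow> nat))"
proof (rule finite_subset)
  show "compositions k x \<subseteq> {ms. set ms \<subseteq> {..x} \<and> length ms = k}"
  proof safe
    fix ms m assume "ms \<in> compositions k x" "m \<in> set ms"
    have "m j \<le> sum_list ms j" for j
      unfolding sum_list_fun_apply using \<open>m \<in> set ms\<close> by (intro member_le_sum_list) auto
    with \<open>ms \<in> compositions k x\<close> show "m \<le> x"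
      by (simp add: compositions_def le_fun_def)
  qed (simp add: compositions_def)
  show "finite {ms. set ms \<subseteq> {..x} \<and> length ms = k}"
    by (rule finite_lists_length_eq[OF finite_atMost_fun])
qed

lemma compositions_add:
  "compositions (a + b) x =
     (\<lambda>(y, as, bs). as @ bs) ` (SIGMA y:{..x}. compositions a y \<times> compositions b (x - y))"
proof safe
  fix ms assume ms: "ms \<in> compositions (a + b) x"
  let ?y = "sum_list (take a ms)"
  have "?y j + sum_list (drop a ms) j = x j" for j
    using ms by (simp add: compositions_def flip: sum_list_append plus_fun_apply)
  then have le: "?y \<le> x" and drop: "sum_list (drop a ms) = x - ?y"
    by (simp_all add: le_fun_def fun_eq_iff) (metis le_add1, metis add_diff_cancel_left')
  have "take a ms \<in> compositions a ?y" and "drop a ms \<in> compositions b (x - ?y)"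
    using ms drop by (simp_all add: compositions_def)
  with le have "(?y, take a ms, drop a ms) \<in> (SIGMA y:{..x}. compositions a y \<times> compositions b (x - y))"
    by simp
  then show "ms \<in> (\<lambda>(y, as, bs). as @ bs) ` (SIGMA y:{..x}. compositions a y \<times> compositions b (x - y))"
    by (rule rev_image_eqI) simp
next
  fix y as bs assume "y \<le> x" "as \<in> compositions a y" "bs \<in> compositions b (x - y)"
  then show "as @ bs \<in> compositions (a + b) x"
    by (simp add: compositions_def fun_eq_iff le_fun_def)
qed

lemma gbinom_add:
  "gbinom h (a + b) x = (\<Sum>y\<le>x. gbinom h a y * gbinom h b (x - y))"
proof -
  let ?S = "SIGMA y:{..x}. compositions a y \<times> compositions b (x - y)"
  have "inj_on (\<lambda>(y, as, bs). as @ bs) ?S"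
  proof (rule inj_onI)
    fix u v assume "u \<in> ?S" "v \<in> ?S" "(\<lambda>(y, as, bs). as @ bs) u = (\<lambda>(y, as, bs). as @ bs) v"
    moreover obtain y as bs y' as' bs' where "u = (y, as, bs)" "v = (y', as', bs')"
      by (cases u, cases v) blast
    ultimately have "as @ bs = as' @ bs'" "length as = length as'" "sum_list as = y" "sum_list as' = y'"
      by (simp_all add: compositions_def)
    with \<open>u = (y, as, bs)\<close> \<open>v = (y', as', bs')\<close> show "u = v"
      by (simp add: append_eq_append_conv)
  qed
  then have "gbinom h (a + b) x = (\<Sum>(y, as, bs)\<in>?S. prod_list (map h (as @ bs)))"
    unfolding gbinom_compositions compositions_add by (simp add: sum.reindex case_prod_unfold)
  also have "\<dots> = (\<Sum>y\<le>x. \<Sum>(as, bs)\<in>compositions a y \<times> compositions b (x - y).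
                       prod_list (map h as) * prod_list (map h bs))"
    by (subst sum.Sigma) (auto simp: finite_atMost_fun finite_compositions)
  also have "\<dots> = (\<Sum>y\<le>x. gbinom h a y * gbinom h b (x - y))"
    by (simp add: gbinom_compositions sum_product sum.cartesian_product)
  finally show ?thesis .
qed

lemma gbinom_Suc_0: "gbinom h (Suc 0) x = h x"
proof -
  have "compositions (Suc 0) x = {[x]}"
    by (auto simp: compositions_def length_Suc_conv)
  then show ?thesis
    by (simp add: gbinom_compositions)
qed

lemma gbinom_mult: "gbinom h (n * k) x = gbinom (gbinom h k) n x"
proof (induction n arbitrary: x)
  case 0
  show ?case
    by (simp add: gbinom_def)
next
  case (Suc n)
  have "gbinom h (k + n * k) x = (\<Sum>y\<le>x. gbinom h k y * gbinom h (n * k) (x - y))"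
    by (rule gbinom_add)
  also have "\<dots> = (\<Sum>y\<le>x. gbinom (gbinom h k) (Suc 0) y * gbinom (gbinom h k) n (x - y))"
    by (simp only: Suc.IH gbinom_Suc_0)
  also have "\<dots> = gbinom (gbinom h k) (Suc 0 + n) x"
    by (rule gbinom_add[symmetric])
  finally show ?case
    by simp
qed

lemma funpow_mult_fixpoint: "(f ^^ d) x = x \<Longrightarrow> (f ^^ (d * k)) x = x"
  by (induction k) (simp_all add: funpow_add)

lemma funpow_mod_period:
  assumes "(f ^^ p) x = x"
  shows "(f ^^ k) x = (f ^^ (k mod p)) x"
proof -
  have "(f ^^ k) x = (f ^^ (k mod p + p * (k div p))) x"
    by simp
  also have "\<dots> = (f ^^ (k mod p)) ((f ^^ (p * (k div p))) x)"
    by (simp only: funpow_add o_apply)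
  finally show ?thesis
    by (simp only: funpow_mult_fixpoint[OF assms])
qed

lemma prime_dvd_funpow_period:
  assumes "prime p" "(f ^^ p) x = x" "f x \<noteq> x" "(f ^^ d) x = x"
  shows "p dvd d"
proof (rule ccontr)
  assume "\<not> p dvd d"
  then have "d \<noteq> 0"
    by (metis dvd_0_right)
  moreover have "gcd d p = 1"
    using prime_imp_coprime[OF \<open>prime p\<close> \<open>\<not> p dvd d\<close>]
    by (simp add: coprime_commute coprime_imp_gcd_eq_1)
  ultimately obtain u v where uv: "d * u = p * v + 1"
    using bezout_nat[of d p] by auto
  have "x = (f ^^ (d * u)) x"
    by (simp add: funpow_mult_fixpoint assms(4))
  also have "\<dots> = f ((f ^^ (p * v)) x)"
    by (simp add: uv)
  also have "\<dots> = f x"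
    by (simp add: funpow_mult_fixpoint assms(2))
  finally show False
    using assms(3) by simp
qed

lemma inj_on_funpow_prime_period:
  assumes "prime p" "(f ^^ p) x = x" "f x \<noteq> x"
  shows "inj_on (\<lambda>k. (f ^^ k) x) {..<p}"
proof -
  have "i = j" if "i < j" "j < p" "(f ^^ i) x = (f ^^ j) x" for i j
  proof -
    from \<open>(f ^^ i) x = (f ^^ j) x\<close>
    have "(f ^^ (p - i + i)) x = (f ^^ (p - i + j)) x"
      by (simp only: funpow_add o_apply)
    moreover have "p - i + i = p" "p - i + j = (j - i) + p"
      using that by auto
    ultimately have "(f ^^ (j - i)) x = x"
      by (simp only: funpow_add o_apply assms(2))
    with assms have "p dvd j - i"
      by (intro prime_dvd_funpow_period)
    with that show ?thesis
      by (auto dest: dvd_imp_le)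
  qed
  then show ?thesis
    by (intro inj_onI) (metis linorder_cases lessThan_iff)
qed

lemma funpow_in_invariant_set: "f ` S \<subseteq> S \<Longrightarrow> x \<in> S \<Longrightarrow> (f ^^ k) x \<in> S"
  by (induction k) auto

lemma prime_dvd_sum_periodic:
  fixes w :: "'a \<Rightarrow> nat"
  assumes "finite S" "prime p" "f ` S \<subseteq> S"
    and "\<And>x. x \<in> S \<Longrightarrow> (f ^^ p) x = x" "\<And>x. x \<in> S \<Longrightarrow> f x \<noteq> x"
    and "\<And>x. x \<in> S \<Longrightarrow> w (f x) = w x"
  shows "p dvd sum w S"
  using assms(1,3-6)
proof (induction S rule: finite_psubset_induct)
  case (psubset S)
  show ?case
  proof (cases "S = {}")
    case False
    then obtain x where "x \<in> S"
      by blast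
    define orb where "orb = (\<lambda>k. (f ^^ k) x) ` {..<p}"
    \<comment> \<open>an orbit of exactly \<open>p\<close> elements of equal weight, whose removal leaves an invariant set\<close>
    have p_pos: "0 < p"
      using \<open>prime p\<close> by (rule prime_gt_0_nat)
    have in_orb: "(f ^^ k) x \<in> orb" for k
      using funpow_mod_period[OF psubset.prems(2)[OF \<open>x \<in> S\<close>], of k] p_pos
      by (simp add: orb_def)
    have "orb \<subseteq> S"
      using funpow_in_invariant_set[OF psubset.prems(1) \<open>x \<in> S\<close>] by (auto simp: orb_def)
    have "w ((f ^^ k) x) = w x" for k
      by (induction k) (simp_all add: psubset.prems(4) funpow_in_invariant_set[OF psubset.prems(1) \<open>x \<in> S\<close>])
    then have "sum w orb = (\<Sum>_\<in>orb. w x)"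
      by (intro sum.cong) (auto simp: orb_def)
    also have "\<dots> = card orb * w x"
      by simp
    also have "card orb = p"
      using inj_on_funpow_prime_period[OF \<open>prime p\<close> psubset.prems(2,3)[OF \<open>x \<in> S\<close>]]
      by (simp add: orb_def card_image)
    finally have sum_orb: "sum w orb = p * w x" .
    have "f y \<in> S - orb" if "y \<in> S - orb" for y
    proof -
      have "f y \<notin> orb"
      proof
        assume "f y \<in> orb"
        then obtain k where "f y = (f ^^ k) x"
          by (auto simp: orb_def)
        have "y = (f ^^ Suc (p - 1)) y"
          using p_pos psubset.prems(2) that by simp
        also have "\<dots> = (f ^^ (p - 1)) (f y)"
          by (simp only: funpow_Suc_right o_apply)
        also have "\<dots> = (f ^^ (p - 1 + k)) x"
          by (simp only: funpow_add o_apply \<open>f y = (f ^^ k) x\<close>)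
        finally show False
          using in_orb that by simp
      qed
      with that psubset.prems(1) show ?thesis
        by auto
    qed
    moreover have "S - orb \<subset> S"
      using \<open>x \<in> S\<close> in_orb[of 0] by auto
    ultimately have "p dvd sum w (S - orb)"
      using psubset.prems(2-4) by (intro psubset.IH) auto
    moreover have "sum w S = sum w orb + sum w (S - orb)"
      using \<open>orb \<subseteq> S\<close> psubset.hyps by (simp add: sum.subset_diff)
    ultimately show ?thesis
      by (simp add: sum_orb)
  qed simp
qed

lemma prime_dvd_gbinom_prime:
  assumes "prime p" "\<not> p dvd x j"
  shows "p dvd gbinom h p x"
  unfolding gbinom_compositions
proof (rule prime_dvd_sum_periodic[where f = rotate1])
  show "rotate1 ` compositions p x \<subseteq> compositions p x"
  proof (clarsimp simp: compositions_def)
    show "sum_list (rotate1 ms) = sum_list ms" for ms :: "('a \<Rightarrow> nat) list"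
      by (cases ms) (simp_all add: add.commute)
  qed
  show "(rotate1 ^^ p) ms = ms" if "ms \<in> compositions p x" for ms
    using that by (simp add: compositions_def flip: rotate_def)
  show "rotate1 ms \<noteq> ms" if "ms \<in> compositions p x" for ms
  proof
    assume "rotate1 ms = ms"
    have "length ms = p" "sum_list ms = x"
      using that by (simp_all add: compositions_def)
    then have "ms \<noteq> []"
      using prime_gt_0_nat[OF \<open>prime p\<close>] by auto
    with \<open>rotate1 ms = ms\<close> have "card (set ms) = Suc 0"
      using rotate1_fixpoint_card by fastforce
    with \<open>length ms = p\<close> obtain c where "ms = replicate p c"
      by (auto simp: card_set_1_iff_replicate)
    with \<open>sum_list ms = x\<close> have "x = of_nat p * c"
      by (simp add: sum_list_replicate)
    then have "x j = p * c j"
      by simp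
    with assms(2) show False
      by simp
  qed
  show "(\<Prod>m\<leftarrow>rotate1 ms. h m) = (\<Prod>m\<leftarrow>ms. h m)" for ms
    by (cases ms) (simp_all add: mult.commute)
qed (use assms(1) finite_compositions in auto)

lemma power_length_filter_dvd_prod_list:
  fixes h :: "'a \<Rightarrow> 'b::comm_semiring_1"
  assumes "\<And>y. P y \<Longrightarrow> c dvd h y"
  shows "c ^ length (filter P ys) dvd (\<Prod>y\<leftarrow>ys. h y)"
  by (induction ys) (auto intro: mult_dvd_mono assms)

lemma not_dvd_sum_list_if_unique_not_dvd:
  assumes "length (filter (\<lambda>y. \<exists>j. \<not> p dvd y j) ys) = 1"
  shows "\<exists>j. \<not> (p::nat) dvd sum_list ys j"
  using assms
proof (induction ys)
  case (Cons y ys)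
  show ?case
  proof (cases "\<exists>j. \<not> p dvd y j")
    case True
    then obtain j where "\<not> p dvd y j"
      by blast
    moreover from True Cons.prems have "\<forall>z\<in>set ys. \<forall>j. p dvd z j"
      by (simp add: filter_empty_conv)
    then have "p dvd sum_list ys j"
      by (induction ys) auto
    ultimately have "\<not> p dvd y j + sum_list ys j"
      by (simp add: dvd_add_left_iff)
    then show ?thesis
      by auto
  next
    case False
    with Cons obtain j where "\<not> p dvd sum_list ys j"
      by auto
    with False show ?thesis
      by (auto simp: dvd_add_right_iff)
  qed
qed simp

lemma prod_list_cong_0_mod_square:
  fixes p :: nat and h :: "('a \<Rightarrow> nat) \<Rightarrow> nat"
  assumes "\<And>y. \<exists>j. \<not> p dvd y j \<Longrightarrow> p dvd h y"
    and "\<forall>j. p dvd sum_list ys j" and "\<exists>y\<in>set ys. \<exists>j. \<not> p dvd y j"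
  shows "[(\<Prod>y\<leftarrow>ys. h y) = 0] (mod p^2)"
proof -
  let ?k = "length (filter (\<lambda>y. \<exists>j. \<not> p dvd y j) ys)"
  have "?k \<noteq> 0"
    using assms(3) by (auto simp: filter_empty_conv)
  moreover have "?k \<noteq> 1"
    using assms(2) not_dvd_sum_list_if_unique_not_dvd[of p ys] by blast
  ultimately have "2 \<le> ?k"
    by linarith
  then have "p^2 dvd p ^ ?k"
    by (rule le_imp_power_dvd)
  also have "\<dots> dvd (\<Prod>y\<leftarrow>ys. h y)"
    using assms(1) by (rule power_length_filter_dvd_prod_list)
  finally show ?thesis
    by (simp add: cong_0_iff)
qed

lemma sum_compositions_all_dvd:
  assumes "0 < c"
  shows "(\<Sum>ys\<in>{ys \<in> compositions n (\<lambda>j. c * m j). \<forall>y\<in>set ys. \<forall>j. c dvd y j}. \<Prod>y\<leftarrow>ys. h y)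
       = gbinom (\<lambda>z. h (\<lambda>j. c * z j)) n m"
proof -
  define scale where "scale z = (\<lambda>j. c * z j)" for z :: "'a \<Rightarrow> nat"
  have sum_list_scale: "sum_list (map scale zs) = scale (sum_list zs)" for zs
    by (induction zs) (simp_all add: scale_def fun_eq_iff distrib_left)
  have "inj scale"
    using assms by (auto intro!: injI simp: scale_def fun_eq_iff)
  then have inj: "inj_on (map scale) (compositions n m)"
    by (rule inj_on_subset[OF inj_mapI]) simp_all
  have "{ys \<in> compositions n (scale m). \<forall>y\<in>set ys. \<forall>j. c dvd y j} = map scale ` compositions n m"
    (is "?A = _")
  proof (intro equalityI subsetI)
    fix ys assume ys: "ys \<in> {ys \<in> compositions n (scale m). \<forall>y\<in>set ys. \<forall>j. c dvd y j}"
    let ?zs = "map (\<lambda>y j. y j div c) ys"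
    have "map scale ?zs = ys"
      using ys by (auto intro!: map_idI simp: scale_def fun_eq_iff)
    moreover have "?zs \<in> compositions n m"
      using ys \<open>inj scale\<close> calculation sum_list_scale[of ?zs]
      by (auto simp: compositions_def dest: injD)
    ultimately show "ys \<in> map scale ` compositions n m"
      by (rule image_eqI[OF sym])
  qed (auto simp: compositions_def sum_list_scale scale_def)
  then have "(\<Sum>ys\<in>?A. \<Prod>y\<leftarrow>ys. h y) = (\<Sum>zs\<in>compositions n m. \<Prod>z\<leftarrow>zs. h (scale z))"
    by (simp add: sum.reindex[OF inj] comp_def)
  then show ?thesis
    by (simp add: gbinom_compositions scale_def)
qed

theorem theorem7:
  fixes f :: "('n::finite \<Rightarrow> nat) \<Rightarrow> nat"
    and p n :: nat
    and m :: "'n \<Rightarrow> nat"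
    and g :: "('n \<Rightarrow> nat) \<Rightarrow> nat"
  assumes "prime p"
    and "\<And>x. g x = gbinom f p (\<lambda>j. p * x j)"
  shows "[gbinom f (n * p) (\<lambda>j. p * m j) = gbinom g n m] (mod p^2)"
proof -
  let ?B = "gbinom f p"
  let ?C = "compositions n (\<lambda>j. p * m j)"
  let ?all_dvd = "\<lambda>ys. \<forall>y\<in>set ys. \<forall>j. p dvd y j"
  have "gbinom f (n * p) (\<lambda>j. p * m j) = (\<Sum>ys\<in>?C. \<Prod>y\<leftarrow>ys. ?B y)"
    unfolding gbinom_mult by (rule gbinom_compositions)
  also have "[\<dots> = (\<Sum>ys\<in>?C. if ?all_dvd ys then \<Prod>y\<leftarrow>ys. ?B y else 0)] (mod p^2)"
  proof (rule cong_sum)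
    fix ys assume "ys \<in> ?C"
    then have "\<forall>j. p dvd sum_list ys j"
      by (simp add: compositions_def)
    with prime_dvd_gbinom_prime[OF \<open>prime p\<close>]
    show "[(\<Prod>y\<leftarrow>ys. ?B y) = (if ?all_dvd ys then \<Prod>y\<leftarrow>ys. ?B y else 0)] (mod p^2)"
      by (auto intro: prod_list_cong_0_mod_square)
  qed
  also have "(\<Sum>ys\<in>?C. if ?all_dvd ys then \<Prod>y\<leftarrow>ys. ?B y else 0) = (\<Sum>ys\<in>{ys\<in>?C. ?all_dvd ys}. \<Prod>y\<leftarrow>ys. ?B y)"
    by (simp add: sum.inter_filter finite_compositions)
  also have "\<dots> = gbinom (\<lambda>z. ?B (\<lambda>j. p * z j)) n m"
    using prime_gt_0_nat[OF \<open>prime p\<close>] by (rule sum_compositions_all_dvd)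
  also have "(\<lambda>z. ?B (\<lambda>j. p * z j)) = g"
    using assms(2) by (simp add: fun_eq_iff)
  finally show ?thesis .
qed

end
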